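(* In the construction described in the context, assume Assumption 4.3 and Assumption 4.4 hold. Then for every extended state $(\xi,\vec\theta)\in\Xi\times\{-1,1\}^n$ and every $i\in\mathcal{A}(\xi)$ there exists $m\in\mathbb{N}$ with $$\mathcal{K}^m\big((\xi,\vec\theta),(\xi,R_i(\vec\theta))\big)>0.$$
   Context: Let $\Xi$ be a countable set, $\tilde\pi$ a probability measure on $\Xi$ and $\tilde Q$ a Markov kernel on $\Xi$. Assumption 4.3: (i) $\tilde\pi(\xi)>0$ for all $\xi$; (ii) $\tilde Q(\xi,\xi')\ne0$ iff $\tilde Q(\xi',\xi)\ne0$; (iii) the chain generated by $\tilde Q$ is irreducible. State graph $\mathcal{G}=(\mathcal{V},\mathcal{E})$, $\mathcal{V}=\Xi$, $\mathcal{E}=\{(\xi,\xi'):\tilde Q(\xi,\xi')>0\}$. For $i=1,\dots,n$, $\mathcal{G}_i^+=(\mathcal{V}_i,\mathcal{E}_i^+)$ are directed subgraphs of $\mathcal{G}$ without isolated vertices; $\mathcal{E}_i^-=\{(u,v):(v,u)\in\mathcal{E}_i^+\}$, $\mathcal{E}_i=\mathcal{E}_i^+\cup\mathcal{E}_i^-$, with $\mathcal{V}=\bigcup_i\mathcal{V}_i$, $\mathcal{E}=\bigcup_i\mathcal{E}_i$. $\mathcal{N}_i^{\pm}(\xi)=\{\xi':(\xi,\xi')\in\mathcal{E}_i^{\pm}\}$, and $\mathcal{N}_i^\theta$ is $\mathcal{N}_i^+$ for $\theta=+1$, $\mathcal{N}_i^-$ for $\theta=-1$. Extended space $\mathcal{X}=\Xi\times\{-1,1\}^n$;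 $\mathcal{X}_i=\mathcal{V}_i\times\{-1,1\}^n$; $R_i$ flips the sign of the $i$-th component of $\vec\theta$; $S_i(\xi,\vec\theta)=(\xi,R_i(\vec\theta))$. For $(\xi,\vec\theta)\in\mathcal{X}_i$: $Q_i((\xi,\vec\theta),(\xi',\vec\theta'))=\tilde Q(\xi,\xi')/\tilde Q(\xi,\mathcal{N}_i^{\theta_i}(\xi))$ if $\xi'\in\mathcal{N}_i^{\theta_i}(\xi)$, $\vec\theta'=\vec\theta$; $=1$ if $\mathcal{N}_i^{\theta_i}(\xi)=\emptyset$, $\xi'=\xi$, $\vec\theta'=R_i(\vec\theta)$; $=0$ otherwise. Weights $\tilde\omega_i(\xi)=\tilde Q(\xi,\mathcal{N}_i^+(\xi))+\tilde Q(\xi,\mathcal{N}_i^-(\xi))$ (assumed to sum to one over $i$); $\mathcal{A}(\xi)=\{i:\tilde\omega_i(\xi)>0\}$. For $x=(\xi,\vec\theta)\in\mathcal{X}_i$, $x'=(\xi',\vec\theta')$: $r_i(x,x')=\frac{\tilde\omega_i(\xi')\tilde\pi(\xi')Q_i((\xi',R_i\vec\theta'),(\xi,R_i\vec\theta))}{\tilde\omega_i(\xi)\tilde\pi(\xi)Q_i((\xi,\vec\theta),(\xi',\vec\theta'))}$, $P_i(x,x')=Q_i(x,x')\min(1,r_i(x,x'))+\mathbb{1}_{\{S_i(x)\}}(x')[1-\sum_{\tilde x}Q_i(x,\tilde x)\min(1,r_i(x,\tilde x))]$, and $\mathcal{K}((\xi,\vec\theta),\cdot)=\sum_i\tilde\omega_i(\xi)P_i((\xi,\vec\theta),\cdot)$.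 Assumption 4.4: for every $(\xi,\vec\theta)\in\mathcal{X}$ and $i\in\mathcal{A}(\xi)$ there exist $m\in\mathbb{N}$, $\xi'\in\Xi$ with $P_i^m((\xi,\vec\theta),(\xi',R_i(\vec\theta)))>0$. *)

theory Defs
  imports "HOL-Analysis.Analysis"
begin

primrec kpow :: "'b set \<Rightarrow> ('b \<Rightarrow> 'b \<Rightarrow> real) \<Rightarrow> nat \<Rightarrow> 'b \<Rightarrow> 'b \<Rightarrow> real" where
  "kpow S K 0 x y = (if x = y then 1 else 0)"
| "kpow S K (Suc m) x y = (\<Sum>\<^sub>\<infinity>z\<in>S. K x z * kpow S K m z y)"

definition kset :: "('a \<Rightarrow> 'a \<Rightarrow> real) \<Rightarrow> 'a \<Rightarrow> 'a set \<Rightarrow> real" where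
  "kset Q \<xi> A = (\<Sum>\<^sub>\<infinity>\<xi>'\<in>A. Q \<xi> \<xi>')"

definition Nplus :: "(nat \<Rightarrow> ('a \<times> 'a) set) \<Rightarrow> nat \<Rightarrow> 'a \<Rightarrow> 'a set" where
  "Nplus Ep i \<xi> = {\<xi>'. (\<xi>, \<xi>') \<in> Ep i}"

definition Nminus :: "(nat \<Rightarrow> ('a \<times> 'a) set) \<Rightarrow> nat \<Rightarrow> 'a \<Rightarrow> 'a set" where
  "Nminus Ep i \<xi> = {\<xi>'. (\<xi>', \<xi>) \<in> Ep i}"

definition Nsgn :: "(nat \<Rightarrow> ('a \<times> 'a) set) \<Rightarrow> nat \<Rightarrow> int \<Rightarrow> 'a \<Rightarrow> 'a set" where
  "Nsgn Ep i s \<xi> = (if s = 1 then Nplus Ep i \<xi> else Nminus Ep i \<xi>)"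

text \<open>Direction vectors theta in {-1,1}^n are lists of length n (0-indexed); R_i flips entry i.\<close>
definition flip :: "nat \<Rightarrow> int list \<Rightarrow> int list" where
  "flip i \<theta> = \<theta>[i := - (\<theta> ! i)]"

definition Sflip :: "nat \<Rightarrow> 'a \<times> int list \<Rightarrow> 'a \<times> int list" where
  "Sflip i x = (fst x, flip i (snd x))"

definition Xspace :: "nat \<Rightarrow> ('a \<times> int list) set" where
  "Xspace n = {(\<xi>, \<theta>). length \<theta> = n \<and> set \<theta> \<subseteq> {-1, 1}}"

definition omega :: "('a \<Rightarrow> 'a \<Rightarrow> real) \<Rightarrow> (nat \<Rightarrow> ('a \<times> 'a) set) \<Rightarrow> nat \<Rightarrow> 'a \<Rightarrow> real" where
  "omega Q Ep i \<xi> = kset Q \<xi> (Nplus Ep i \<xi>) + kset Q \<xi> (Nminus Ep i \<xi>)"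

definition Qi :: "('a \<Rightarrow> 'a \<Rightarrow> real) \<Rightarrow> (nat \<Rightarrow> ('a \<times> 'a) set) \<Rightarrow> nat
    \<Rightarrow> 'a \<times> int list \<Rightarrow> 'a \<times> int list \<Rightarrow> real" where
  "Qi Q Ep i x x' =
     (let \<xi> = fst x; \<theta> = snd x; \<xi>' = fst x'; \<theta>' = snd x'; N = Nsgn Ep i (\<theta> ! i) \<xi> in
      if N \<noteq> {} then (if \<xi>' \<in> N \<and> \<theta>' = \<theta> then Q \<xi> \<xi>' / kset Q \<xi> N else 0)
      else (if \<xi>' = \<xi> \<and> \<theta>' = flip i \<theta> then 1 else 0))"

definition ri :: "('a \<Rightarrow> real) \<Rightarrow> ('a \<Rightarrow> 'a \<Rightarrow> real) \<Rightarrow> (nat \<Rightarrow> ('a \<times> 'a) set) \<Rightarrow> nat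
    \<Rightarrow> 'a \<times> int list \<Rightarrow> 'a \<times> int list \<Rightarrow> real" where
  "ri \<pi> Q Ep i x x' =
     (omega Q Ep i (fst x') * \<pi> (fst x') * Qi Q Ep i (Sflip i x') (Sflip i x))
     / (omega Q Ep i (fst x) * \<pi> (fst x) * Qi Q Ep i x x')"

definition Pi :: "('a \<Rightarrow> real) \<Rightarrow> ('a \<Rightarrow> 'a \<Rightarrow> real) \<Rightarrow> (nat \<Rightarrow> ('a \<times> 'a) set) \<Rightarrow> nat \<Rightarrow> nat
    \<Rightarrow> 'a \<times> int list \<Rightarrow> 'a \<times> int list \<Rightarrow> real" where
  "Pi \<pi> Q Ep n i x x' =
     Qi Q Ep i x x' * min 1 (ri \<pi> Q Ep i x x')
     + (if x' = Sflip i x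
        then 1 - (\<Sum>\<^sub>\<infinity>y\<in>Xspace n. Qi Q Ep i x y * min 1 (ri \<pi> Q Ep i x y))
        else 0)"

definition Kker :: "('a \<Rightarrow> real) \<Rightarrow> ('a \<Rightarrow> 'a \<Rightarrow> real) \<Rightarrow> (nat \<Rightarrow> ('a \<times> 'a) set) \<Rightarrow> nat
    \<Rightarrow> 'a \<times> int list \<Rightarrow> 'a \<times> int list \<Rightarrow> real" where
  "Kker \<pi> Q Ep n x x' = (\<Sum>i<n. omega Q Ep i (fst x) * Pi \<pi> Q Ep n i x x')"

end

theory Submission
  imports Defs
begin

text \<open>A positive \<open>P\<^sub>i\<close>-move that changes the direction vector is the flip \<open>S\<^sub>i\<close>, and the
  Metropolis-Hastings ratio of the move \<open>S\<^sub>i y \<rightarrow> S\<^sub>i x\<close> is the reciprocal of that of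
  \<open>x \<rightarrow> y\<close>; hence positive \<open>P\<^sub>i\<close>-paths can be reversed after conjugation by \<open>S\<^sub>i\<close>.
  By Assumption 4.4 a positive \<open>P\<^sub>i\<close>-path leads from \<open>(\<xi>, \<theta>)\<close> to some \<open>(\<xi>', R\<^sub>i \<theta>)\<close>.
  It keeps the direction \<open>\<theta>\<close> up to some \<open>(\<eta>, \<theta>)\<close>, flips to \<open>(\<eta>, R\<^sub>i \<theta>)\<close>, and the
  reversal of the first segment leads from there back to \<open>(\<xi>, R\<^sub>i \<theta>)\<close>. The weight \<open>\<omega>\<^sub>i\<close>
  stays positive along \<open>P\<^sub>i\<close>-paths, so each step is a positive step of \<open>K\<close>.\<close>

lemma flip_flip [simp]: "i < length \<theta> \<Longrightarrow> flip i (flip i \<theta>) = \<theta>"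
  by (simp add: flip_def)

lemma nth_in_Xspace:
  assumes "(\<xi>, \<theta>) \<in> Xspace n" "i < n"
  shows "\<theta> ! i \<in> {-1, 1}"
  using assms nth_mem[of i \<theta>] unfolding Xspace_def by blast

lemma flip_in_Xspace:
  assumes "(\<xi>, \<theta>) \<in> Xspace n" "i < n"
  shows "(\<xi>, flip i \<theta>) \<in> Xspace n"
proof -
  have "\<theta> ! i \<in> {-1, 1}" using nth_in_Xspace[OF assms] .
  then show ?thesis
    using assms set_update_subset_insert[of \<theta> i "- (\<theta> ! i)"] by (auto simp: Xspace_def flip_def)
qed

lemma flip_neq:
  assumes "(\<xi>, \<theta>) \<in> Xspace n" "i < n"
  shows "flip i \<theta> \<noteq> \<theta>"
proof -
  have "\<theta> ! i \<in> {-1, 1}" using nth_in_Xspace[OF assms] .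
  moreover have "flip i \<theta> ! i = - (\<theta> ! i)" using assms by (simp add: flip_def Xspace_def)
  ultimately show ?thesis by force
qed

lemma fst_Sflip [simp]: "fst (Sflip i x) = fst x"
  by (simp add: Sflip_def)

lemma Sflip_in_Xspace: "x \<in> Xspace n \<Longrightarrow> i < n \<Longrightarrow> Sflip i x \<in> Xspace n"
  by (cases x) (simp add: Sflip_def flip_in_Xspace)

lemma Sflip_Sflip: "x \<in> Xspace n \<Longrightarrow> i < n \<Longrightarrow> Sflip i (Sflip i x) = x"
  by (cases x) (simp add: Sflip_def Xspace_def)

lemma has_sum_sum:
  fixes f :: "'i \<Rightarrow> 'b \<Rightarrow> 'c::topological_comm_monoid_add"
  assumes "finite I" "\<And>i. i \<in> I \<Longrightarrow> (f i has_sum s i) A"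
  shows "((\<lambda>x. \<Sum>i\<in>I. f i x) has_sum (\<Sum>i\<in>I. s i)) A"
  using assms by (induction I rule: finite_induct) (auto intro: has_sum_add)

lemma summable_on_mult_bounded:
  fixes k g :: "'b \<Rightarrow> real"
  assumes "k summable_on S" "\<And>z. z \<in> S \<Longrightarrow> 0 \<le> k z"
    and "\<And>z. z \<in> S \<Longrightarrow> 0 \<le> g z" "\<And>z. z \<in> S \<Longrightarrow> g z \<le> C"
  shows "(\<lambda>z. k z * g z) summable_on S"
  by (rule summable_on_comparison_test[OF summable_on_cmult_left[OF assms(1), of C]])
     (use assms in \<open>auto intro: mult_left_mono\<close>)

lemma kpow_nonzero_imp_rtranclp:
  assumes "kpow S K m x y \<noteq> 0"
  shows "(\<lambda>a b. b \<in> S \<and> K a b \<noteq> 0)\<^sup>*\<^sup>* x y"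
  using assms
proof (induction m arbitrary: x)
  case 0
  then show ?case by (simp split: if_splits)
next
  case (Suc m)
  then obtain z where "z \<in> S" "K x z \<noteq> 0" "kpow S K m z y \<noteq> 0"
    by (metis (no_types, lifting) infsum_0 kpow.simps(2) mult_eq_0_iff)
  with Suc.IH show ?case by (auto intro: converse_rtranclp_into_rtranclp)
qed

text \<open>The mass bound matters: the infinite sum of a non-summable family is \<open>0\<close>, so
  without summability a positive term would not make \<open>kpow\<close> positive.\<close>

context
  fixes S :: "'b set" and K :: "'b \<Rightarrow> 'b \<Rightarrow> real" and B :: real
  assumes K_nonneg: "\<And>a b. a \<in> S \<Longrightarrow> b \<in> S \<Longrightarrow> 0 \<le> K a b"
    and K_summable: "\<And>a. a \<in> S \<Longrightarrow> K a summable_on S"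
    and K_mass_le: "\<And>a. a \<in> S \<Longrightarrow> infsum (K a) S \<le> B"
begin

lemma kpow_bounds:
  assumes "x \<in> S"
  shows "0 \<le> kpow S K m x y \<and> kpow S K m x y \<le> B ^ m"
  using assms
proof (induction m arbitrary: x)
  case 0
  then show ?case by simp
next
  case (Suc m)
  have "0 \<le> infsum (K x) S" using Suc.prems K_nonneg by (simp add: infsum_nonneg)
  then have B: "0 \<le> B" using K_mass_le[OF Suc.prems] by linarith
  have "(\<lambda>z. K x z * kpow S K m z y) summable_on S"
    using Suc K_summable K_nonneg by (intro summable_on_mult_bounded) auto
  then have "infsum (\<lambda>z. K x z * kpow S K m z y) S \<le> infsum (\<lambda>z. K x z * B ^ m) S"
    using Suc K_summable K_nonneg
    by (intro infsum_mono summable_on_cmult_left) (auto intro: mult_left_mono)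
  also have "\<dots> = infsum (K x) S * B ^ m" by (rule infsum_cmult_left')
  also have "\<dots> \<le> B ^ Suc m" using K_mass_le[OF Suc.prems] B by (simp add: mult_right_mono)
  finally show ?case using Suc K_nonneg by (auto intro: infsum_nonneg)
qed

lemma rtranclp_imp_kpow_pos:
  assumes "(\<lambda>a b. a \<in> S \<and> b \<in> S \<and> 0 < K a b)\<^sup>*\<^sup>* x y"
  shows "\<exists>m. 0 < kpow S K m x y"
  using assms
proof (induction rule: converse_rtranclp_induct)
  case base
  have "0 < kpow S K 0 y y" by simp
  then show ?case ..
next
  case (step x z)
  then obtain m where m: "0 < kpow S K m z y" by blast
  let ?f = "\<lambda>w. K x w * kpow S K m w y"
  have "?f summable_on S"
    using step K_summable K_nonneg kpow_bounds by (intro summable_on_mult_bounded[where C="B ^ m"]) auto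
  then have "?f z \<le> infsum ?f S"
    using step K_nonneg kpow_bounds
    by (intro infsum_mono_neutral[where A="{z}", simplified]) auto
  moreover have "0 < ?f z" using step m by simp
  ultimately have "0 < kpow S K (Suc m) x y" by simp
  then show ?case ..
qed

end

locale lifted_kernel =
  fixes \<pi> :: "'a \<Rightarrow> real" and Q :: "'a \<Rightarrow> 'a \<Rightarrow> real"
    and Ep :: "nat \<Rightarrow> ('a \<times> 'a) set" and n :: nat
  assumes Q_nonneg: "\<And>\<xi> \<xi>'. 0 \<le> Q \<xi> \<xi>'"
    and Q_markov: "\<And>\<xi>. (Q \<xi> has_sum 1) UNIV"
    and pi_pos: "\<And>\<xi>. 0 < \<pi> \<xi>"
    and omega_sum: "\<And>\<xi>. (\<Sum>i<n. omega Q Ep i \<xi>) = 1"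
begin

abbreviation "X \<equiv> Xspace n"
abbreviation "\<omega> j \<equiv> omega Q Ep j"
abbreviation "q j \<equiv> Qi Q Ep j"
abbreviation "r j \<equiv> ri \<pi> Q Ep j"
abbreviation "accept j x y \<equiv> q j x y * min 1 (r j x y)"
abbreviation "P j \<equiv> Pi \<pi> Q Ep n j"
abbreviation "K \<equiv> Kker \<pi> Q Ep n"

lemma kset_nonneg: "0 \<le> kset Q \<xi> A"
  unfolding kset_def using Q_nonneg by (simp add: infsum_nonneg)

lemma omega_nonneg: "0 \<le> \<omega> j \<xi>"
  unfolding omega_def using kset_nonneg by simp

lemma Qi_nonneg: "0 \<le> q j x y"
  unfolding Qi_def Let_def using kset_nonneg Q_nonneg by simp

lemma ri_nonneg: "0 \<le> r j x y"
  unfolding ri_def using omega_nonneg Qi_nonneg pi_pos by (simp add: less_imp_le)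

lemma accept_nonneg: "0 \<le> accept j x y"
  using Qi_nonneg ri_nonneg by simp

lemma accept_le_Qi: "accept j x y \<le> q j x y"
  using Qi_nonneg by (simp add: mult_left_le)

lemma Qi_nonzero_cases: "q j x y \<noteq> 0 \<Longrightarrow> y = Sflip j x \<or> snd y = snd x"
  unfolding Qi_def Let_def Sflip_def by (cases y) (auto split: if_splits)

lemma Qi_has_sum_le_1:
  assumes x: "x \<in> X" and j: "j < n"
  shows "\<exists>s \<le> 1. (q j x has_sum s) X"
proof -
  obtain \<xi> \<theta> where x_eq: "x = (\<xi>, \<theta>)" by (cases x)
  define N where "N = Nsgn Ep j (\<theta> ! j) \<xi>"
  show ?thesis
  proof (cases "N = {}")
    case True
    then have "q j x = (\<lambda>y. if y = (\<xi>, flip j \<theta>) then 1 else 0)"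
      unfolding Qi_def x_eq N_def Let_def by (auto simp: fun_eq_iff)
    moreover have "(\<xi>, flip j \<theta>) \<in> X" using flip_in_Xspace x j x_eq by simp
    ultimately have "(q j x has_sum 1) X"
      by (intro has_sum_finite_neutralI[where B="{(\<xi>, flip j \<theta>)}"]) auto
    then show ?thesis by blast
  next
    case False
    define c where "c = kset Q \<xi> N"
    have q_eq: "q j x = (\<lambda>y. if fst y \<in> N \<and> snd y = \<theta> then Q \<xi> (fst y) / c else 0)"
      using False unfolding Qi_def x_eq N_def c_def Let_def by (auto simp: fun_eq_iff)
    have "Q \<xi> summable_on N"
      using Q_markov summable_on_subset_banach[of "Q \<xi>" UNIV N] summable_on_def by blast
    then have "(Q \<xi> has_sum c) N" unfolding c_def kset_def by simp
    from has_sum_divide_const[OF this] have "((\<lambda>\<xi>'. Q \<xi> \<xi>' / c) has_sum (c / c)) N" .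
    moreover have inj: "inj_on (\<lambda>\<xi>'. (\<xi>', \<theta>)) N" by (simp add: inj_on_def)
    ultimately have "(q j x has_sum (c / c)) ((\<lambda>\<xi>'. (\<xi>', \<theta>)) ` N)"
      unfolding has_sum_reindex[OF inj]
      by (subst has_sum_cong[where g="\<lambda>\<xi>'. Q \<xi> \<xi>' / c"]) (auto simp: q_eq)
    moreover have "(\<lambda>\<xi>'. (\<xi>', \<theta>)) ` N \<subseteq> X" using x x_eq unfolding Xspace_def by auto
    ultimately have "(q j x has_sum (c / c)) X"
      by (subst has_sum_cong_neutral[where T="(\<lambda>\<xi>'. (\<xi>', \<theta>)) ` N"]) (auto simp: q_eq)
    moreover have "c / c \<le> 1" by (cases "c = 0") auto
    ultimately show ?thesis by blast
  qed
qed

lemma infsum_accept_le_1: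
  assumes "x \<in> X" "j < n"
  shows "infsum (accept j x) X \<le> 1"
proof -
  obtain s where s: "(q j x has_sum s) X" "s \<le> 1" using Qi_has_sum_le_1[OF assms] by blast
  have q_summable: "q j x summable_on X" using s(1) by (rule has_sum_imp_summable)
  have "accept j x summable_on X"
    by (rule summable_on_comparison_test[OF q_summable accept_le_Qi accept_nonneg])
  then have "infsum (accept j x) X \<le> infsum (q j x) X"
    by (rule infsum_mono[OF _ q_summable accept_le_Qi])
  also have "\<dots> = s" using s(1) by (rule infsumI)
  finally show ?thesis using s(2) by linarith
qed

lemma Pi_ge_accept:
  assumes "x \<in> X" "j < n"
  shows "accept j x y \<le> P j x y"
proof -
  have "0 \<le> (if y = Sflip j x then 1 - infsum (accept j x) X else 0)"
    using infsum_accept_le_1[OF assms] by simp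
  then show ?thesis unfolding Pi_def by linarith
qed

lemma Pi_nonneg:
  assumes "x \<in> X" "j < n"
  shows "0 \<le> P j x y"
  using Pi_ge_accept[OF assms, of y] accept_nonneg[of j x y] by linarith

lemma Pi_le: "P j x y \<le> q j x y + (if y = Sflip j x then 1 else 0)"
proof -
  have "0 \<le> infsum (accept j x) X" by (rule infsum_nonneg) (rule accept_nonneg)
  then have "(if y = Sflip j x then 1 - infsum (accept j x) X else 0)
      \<le> (if y = Sflip j x then 1 else 0)"
    by simp
  then show ?thesis using accept_le_Qi[of j x y] unfolding Pi_def by linarith
qed

lemma Kker_nonneg:
  assumes "x \<in> X"
  shows "0 \<le> K x y"
  unfolding Kker_def
  by (intro sum_nonneg mult_nonneg_nonneg) (use Pi_nonneg[OF assms] omega_nonneg in auto)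

lemma Kker_ge_Pi:
  assumes "x \<in> X" "j < n"
  shows "\<omega> j (fst x) * P j x y \<le> K x y"
  unfolding Kker_def
  by (rule member_le_sum[where f="\<lambda>i. \<omega> i (fst x) * P i x y"])
     (use assms Pi_nonneg omega_nonneg in auto)

lemma Kker_summable_infsum_le_2:
  assumes x: "x \<in> X"
  shows "K x summable_on X" and "infsum (K x) X \<le> 2"
proof -
  define s where "s j = infsum (q j x) X" for j
  have q_has_sum: "(q j x has_sum s j) X" and s_le_1: "s j \<le> 1" if "j < n" for j
    using Qi_has_sum_le_1[OF x that] unfolding s_def by (metis infsumI)+
  define G where "G z = (\<Sum>j<n. \<omega> j (fst x) * (q j x z + (if z = Sflip j x then 1 else 0)))" for z
  have G_has_sum: "(G has_sum (\<Sum>j<n. \<omega> j (fst x) * (s j + 1))) X"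
    unfolding G_def
  proof (intro has_sum_sum has_sum_cmult_right has_sum_add)
    fix j assume "j \<in> {..<n}"
    then show "(q j x has_sum s j) X" by (simp add: q_has_sum)
    show "((\<lambda>z. if z = Sflip j x then 1 else 0) has_sum 1) X"
      using Sflip_in_Xspace[OF x] \<open>j \<in> {..<n}\<close>
      by (intro has_sum_finite_neutralI[where B="{Sflip j x}"]) auto
  qed simp
  have K_le_G: "K x z \<le> G z" for z
    unfolding Kker_def G_def by (intro sum_mono mult_left_mono Pi_le omega_nonneg)
  show K_summable: "K x summable_on X"
    by (rule summable_on_comparison_test[OF has_sum_imp_summable[OF G_has_sum] K_le_G Kker_nonneg[OF x]])
  have "infsum (K x) X \<le> infsum G X"
    by (rule infsum_mono[OF K_summable has_sum_imp_summable[OF G_has_sum] K_le_G])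
  also have "\<dots> = (\<Sum>j<n. \<omega> j (fst x) * (s j + 1))"
    using G_has_sum by (rule infsumI)
  also have "\<dots> \<le> (\<Sum>j<n. \<omega> j (fst x) * 2)"
    using s_le_1 omega_nonneg by (intro sum_mono mult_left_mono) auto
  also have "\<dots> = 2" using omega_sum by (simp add: sum_distrib_right[symmetric])
  finally show "infsum (K x) X \<le> 2" .
qed

lemma Pi_pos_accept_pos:
  assumes "0 < P j x y" "y \<noteq> Sflip j x"
  shows "0 < q j x y" and "0 < r j x y"
proof -
  have "0 < accept j x y" using assms unfolding Pi_def by simp
  then show "0 < q j x y" "0 < r j x y"
    using Qi_nonneg[of j x y] by (auto simp: zero_less_mult_iff)
qed

lemma Pi_pos_cases:
  assumes "0 < P j x y"
  shows "y = Sflip j x \<or> snd y = snd x"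
proof (cases "y = Sflip j x")
  case False
  then have "q j x y \<noteq> 0" using Pi_pos_accept_pos(1)[OF assms] by simp
  with False show ?thesis using Qi_nonzero_cases by blast
qed simp

lemma Pi_pos_omega_pos:
  assumes "0 < \<omega> j (fst x)" "0 < P j x y"
  shows "0 < \<omega> j (fst y)"
proof (cases "y = Sflip j x")
  case True
  with assms(1) show ?thesis by simp
next
  case False
  then have "0 < r j x y" using Pi_pos_accept_pos(2)[OF assms(2)] by blast
  moreover have "r j x y = 0" if "\<omega> j (fst y) = 0" unfolding ri_def using that by simp
  ultimately show ?thesis using omega_nonneg[of j "fst y"] by fastforce
qed

lemma Pi_pos_reverse:
  assumes j: "j < n" and x: "x \<in> X" and y: "y \<in> X"
    and \<omega>: "0 < \<omega> j (fst x)" and P: "0 < P j x y"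
  shows "0 < P j (Sflip j y) (Sflip j x)"
proof (cases "y = Sflip j x")
  case True
  then show ?thesis using Sflip_Sflip[OF x j] P by simp
next
  case False
  have q: "0 < q j x y" and r: "0 < r j x y" using Pi_pos_accept_pos[OF P False] by auto
  define num where "num = \<omega> j (fst y) * \<pi> (fst y) * q j (Sflip j y) (Sflip j x)"
  define den where "den = \<omega> j (fst x) * \<pi> (fst x) * q j x y"
  have "0 < den" unfolding den_def using \<omega> q pi_pos by simp
  moreover have "r j x y = num / den" unfolding ri_def num_def den_def by simp
  ultimately have "0 < num" using r by (simp add: zero_less_divide_iff)
  then have "q j (Sflip j y) (Sflip j x) \<noteq> 0" unfolding num_def by auto
  then have "0 < q j (Sflip j y) (Sflip j x)" using Qi_nonneg order_less_le by metis
  moreover have "r j (Sflip j y) (Sflip j x) = den / num"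
    unfolding ri_def num_def den_def using Sflip_Sflip[OF x j] Sflip_Sflip[OF y j] by simp
  ultimately have "0 < accept j (Sflip j y) (Sflip j x)"
    using \<open>0 < num\<close> \<open>0 < den\<close> by simp
  then show ?thesis using Pi_ge_accept[OF Sflip_in_Xspace[OF y j] j] by (meson less_le_trans)
qed

definition Pi_step :: "nat \<Rightarrow> 'a \<times> int list \<Rightarrow> 'a \<times> int list \<Rightarrow> bool" where
  "Pi_step j x y \<longleftrightarrow> x \<in> X \<and> y \<in> X \<and> 0 < \<omega> j (fst x) \<and> 0 < P j x y"

lemma Pi_step_Kker_pos:
  assumes "j < n" "Pi_step j x y"
  shows "x \<in> X \<and> y \<in> X \<and> 0 < K x y"
proof -
  have "0 < \<omega> j (fst x) * P j x y" using assms(2) unfolding Pi_step_def by simp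
  then show ?thesis using assms Kker_ge_Pi[of x j y] unfolding Pi_step_def by linarith
qed

lemma kpow_Pi_nonzero_imp_Pi_steps:
  assumes j: "j < n" and x: "x \<in> X" and \<omega>: "0 < \<omega> j (fst x)"
    and kpow: "kpow X (P j) m x y \<noteq> 0"
  shows "(Pi_step j)\<^sup>*\<^sup>* x y"
  using kpow_nonzero_imp_rtranclp[OF kpow] x \<omega>
proof (induction rule: converse_rtranclp_induct)
  case base
  then show ?case by simp
next
  case (step a b)
  then have "0 < P j a b" using Pi_nonneg[OF step.prems(1) j, of b] by simp
  with step have "Pi_step j a b" and "0 < \<omega> j (fst b)"
    unfolding Pi_step_def using Pi_pos_omega_pos by auto
  with step show ?case by (meson converse_rtranclp_into_rtranclp)
qed

lemma Pi_steps_reverse: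
  assumes j: "j < n" and steps: "(Pi_step j)\<^sup>*\<^sup>* x y"
  shows "(Pi_step j)\<^sup>*\<^sup>* (Sflip j y) (Sflip j x)"
  using steps
proof (induction rule: rtranclp_induct)
  case base
  then show ?case by simp
next
  case (step y z)
  then have yz: "y \<in> X" "z \<in> X" "0 < \<omega> j (fst y)" "0 < P j y z"
    unfolding Pi_step_def by auto
  then have "Pi_step j (Sflip j z) (Sflip j y)"
    unfolding Pi_step_def
    using Sflip_in_Xspace[OF yz(1) j] Sflip_in_Xspace[OF yz(2) j] Pi_pos_omega_pos[OF yz(3,4)]
      Pi_pos_reverse[OF j yz] by simp
  with step.IH show ?case by (meson converse_rtranclp_into_rtranclp)
qed

lemma Pi_steps_first_flip:
  assumes "(Pi_step j)\<^sup>*\<^sup>* x y" "snd x = \<theta>" "snd y \<noteq> \<theta>"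
  shows "\<exists>\<eta>. (Pi_step j)\<^sup>*\<^sup>* x (\<eta>, \<theta>) \<and> Pi_step j (\<eta>, \<theta>) (\<eta>, flip j \<theta>)"
  using assms(1,3)
proof (induction rule: rtranclp_induct)
  case base
  with assms(2) show ?case by simp
next
  case (step y z)
  show ?case
  proof (cases "snd y = \<theta>")
    case False
    with step.IH show ?thesis by blast
  next
    case True
    then obtain \<eta> where y: "y = (\<eta>, \<theta>)" by (cases y) simp
    have "0 < P j y z" using step.hyps(2) unfolding Pi_step_def by simp
    then have "z = (\<eta>, flip j \<theta>)"
      using Pi_pos_cases[of j y z] step.prems unfolding y by (auto simp: Sflip_def)
    then show ?thesis using step.hyps unfolding y by blast
  qed
qed

theorem Kker_reaches_flip:
  assumes x: "(\<xi>, \<theta>) \<in> X" and j: "j < n" and \<omega>: "0 < \<omega> j \<xi>"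
    and "0 < kpow X (P j) m (\<xi>, \<theta>) (\<xi>', flip j \<theta>)"
  shows "\<exists>m. 0 < kpow X K m (\<xi>, \<theta>) (\<xi>, flip j \<theta>)"
proof -
  have "(Pi_step j)\<^sup>*\<^sup>* (\<xi>, \<theta>) (\<xi>', flip j \<theta>)"
    using kpow_Pi_nonzero_imp_Pi_steps[OF j x, of m] assms by simp
  then obtain \<eta> where to_\<eta>: "(Pi_step j)\<^sup>*\<^sup>* (\<xi>, \<theta>) (\<eta>, \<theta>)"
    and flip_at_\<eta>: "Pi_step j (\<eta>, \<theta>) (\<eta>, flip j \<theta>)"
    using Pi_steps_first_flip[of j "(\<xi>, \<theta>)" "(\<xi>', flip j \<theta>)" \<theta>] flip_neq[OF x j] by auto
  have "(Pi_step j)\<^sup>*\<^sup>* (\<eta>, flip j \<theta>) (\<xi>, flip j \<theta>)"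
    using Pi_steps_reverse[OF j to_\<eta>] by (simp add: Sflip_def)
  with rtranclp.rtrancl_into_rtrancl[OF to_\<eta> flip_at_\<eta>]
  have "(Pi_step j)\<^sup>*\<^sup>* (\<xi>, \<theta>) (\<xi>, flip j \<theta>)"
    by (rule rtranclp_trans)
  then have K_path: "(\<lambda>a b. a \<in> X \<and> b \<in> X \<and> 0 < K a b)\<^sup>*\<^sup>* (\<xi>, \<theta>) (\<xi>, flip j \<theta>)"
    by (rule rtranclp_mono[THEN predicate2D, rotated]) (use Pi_step_Kker_pos[OF j] in auto)
  have "0 \<le> K a b" if "a \<in> X" for a b using Kker_nonneg[OF that] .
  from rtranclp_imp_kpow_pos[OF this Kker_summable_infsum_le_2 K_path] show ?thesis .
qed

end

theorem lemmaB2: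
  fixes \<pi> :: "'a::countable \<Rightarrow> real"
    and Q :: "'a \<Rightarrow> 'a \<Rightarrow> real"
    and n :: nat
    and V :: "nat \<Rightarrow> 'a set"
    and Ep :: "nat \<Rightarrow> ('a \<times> 'a) set"
  assumes pi_prob: "(\<pi> has_sum 1) UNIV"
    and pi_pos: "\<forall>\<xi>. \<pi> \<xi> > 0"
    and Q_nonneg: "\<forall>\<xi> \<xi>'. Q \<xi> \<xi>' \<ge> 0"
    and Q_markov: "\<forall>\<xi>. (Q \<xi> has_sum 1) UNIV"
    and Q_sym: "\<forall>\<xi> \<xi>'. Q \<xi> \<xi>' \<noteq> 0 \<longleftrightarrow> Q \<xi>' \<xi> \<noteq> 0"
    and Q_irred: "\<forall>\<xi> \<xi>'. \<exists>m. kpow UNIV Q m \<xi> \<xi>' > 0"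
    and sub_edges: "\<forall>i<n. Ep i \<subseteq> {(\<xi>, \<xi>'). Q \<xi> \<xi>' > 0}"
    and sub_verts: "\<forall>i<n. Ep i \<subseteq> V i \<times> V i"
    and no_isolated: "\<forall>i<n. \<forall>v\<in>V i. \<exists>u. (v, u) \<in> Ep i \<or> (u, v) \<in> Ep i"
    and cover_V: "(\<Union>i<n. V i) = UNIV"
    and cover_E: "(\<Union>i<n. Ep i \<union> (Ep i)\<inverse>) = {(\<xi>, \<xi>'). Q \<xi> \<xi>' > 0}"
    and omega_sum: "\<forall>\<xi>. (\<Sum>i<n. omega Q Ep i \<xi>) = 1"
    and A44: "\<forall>\<xi> \<theta> i. (\<xi>, \<theta>) \<in> Xspace n \<longrightarrow> i < n \<longrightarrow> omega Q Ep i \<xi> > 0 \<longrightarrow>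
                (\<exists>m \<xi>'. kpow (Xspace n) (Pi \<pi> Q Ep n i) m (\<xi>, \<theta>) (\<xi>', flip i \<theta>) > 0)"
    and x_in: "(\<xi>, \<theta>) \<in> Xspace n"
    and i_lt: "i < n"
    and i_active: "omega Q Ep i \<xi> > 0"
  shows "\<exists>m. kpow (Xspace n) (Kker \<pi> Q Ep n) m (\<xi>, \<theta>) (\<xi>, flip i \<theta>) > 0"
proof -
  interpret lifted_kernel \<pi> Q Ep n
    using Q_nonneg Q_markov pi_pos omega_sum by unfold_locales simp_all
  obtain m \<xi>' where "0 < kpow (Xspace n) (Pi \<pi> Q Ep n i) m (\<xi>, \<theta>) (\<xi>', flip i \<theta>)"
    using A44 x_in i_lt i_active by blast
  then show ?thesis by (rule Kker_reaches_flip[OF x_in i_lt i_active])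
qed

end
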